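(* Assume $\rho_\alpha^{\mathrm{dir}}<1$ and fix $\varepsilon>0$ such that $\beta_\varepsilon:=\rho_\alpha^{\mathrm{dir}}+\varepsilon<1$. For integers $t\ge 0$ and $x\in\mathbb R^m$ define \[ V_\varepsilon^t(x):=\sum_{\ell=0}^{t}\beta_\varepsilon^{-2\ell}\max_{\pi_1,\dots,\pi_\ell\in\Theta}\big\|A_{\pi_\ell}\cdots A_{\pi_1}x\big\|_2^2, \] where the $\ell=0$ term is $\|x\|_2^2$, and $V_\varepsilon^\infty(x):=\lim_{t\to\infty}V_\varepsilon^t(x)$. Then the following hold. (i) $V_\varepsilon^\infty$ is well defined, and there exists $C_\varepsilon\ge 1$ such that $\|x\|_2^2\le V_\varepsilon^\infty(x)\le C_\varepsilon\|x\|_2^2$ for all $x\in\mathbb R^m$. (ii) $p_\varepsilon(x):=\sqrt{V_\varepsilon^\infty(x)}$ is a norm on $\mathbb R^m$. (iii) For every stochastic policy $\mu$ and every $x\in\mathbb R^m$, \[ V_\varepsilon^\infty(A_\mu x)\le \beta_\varepsilon^2\big(V_\varepsilon^\infty(x)-\|x\|_2^2\big)\le \beta_\varepsilon^2 V_\varepsilon^\infty(x). \] Consequently $p_\varepsilon(A_\mu x)\le\beta_\varepsilon p_\varepsilon(x)$ for all $x\in\mathbb R^m$. (iv) $T_\alpha$ is a global contraction in $p_\varepsilon$: $p_\varepsilon(T_\alpha(\theta)-T_\alpha(\bar\theta))\le\beta_\varepsilon p_\varepsilon(\theta-\bar\theta)$ for all $\theta,\bar\theta\in\mathbb R^m$.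 (v) Hence there exists a unique projected Bellman fixed point $\theta^\star$, that is, a unique $\theta^\star$ with $g(\theta^\star)=0$. (vi) For the deterministic recursion $\theta_{k+1}=T_\alpha(\theta_k)$, $k\ge 0$, started from any $\theta_0\in\mathbb R^m$, we have \[ V_\varepsilon^\infty(\theta_k-\theta^\star)\le\beta_\varepsilon^{2k}V_\varepsilon^\infty(\theta_0-\theta^\star), \] \[ \|\theta_k-\theta^\star\|_2\le\sqrt{C_\varepsilon}\,\beta_\varepsilon^k\|\theta_0-\theta^\star\|_2, \] \[ \|\Phi\theta_k-\Phi\theta^\star\|_2\le\|\Phi\|_2\sqrt{C_\varepsilon}\,\beta_\varepsilon^k\|\theta_0-\theta^\star\|_2. \]
   Context: Consider a finite discounted MDP with state space $\mathcal S=\{1,\dots,|\mathcal S|\}$, action space $\mathcal A=\{1,\dots,|\mathcal A|\}$, transition probabilities $P(s'\mid s,a)$, real rewards $r(s,a,s')$, expected reward $R(s,a)=\sum_{s'}P(s'\mid s,a)r(s,a,s')$, and discount factor $\gamma\in(0,1)$. State-action vectors are ordered as $(1,1),(2,1),\dots,(|\mathcal S|,1),(1,2),\dots,(|\mathcal S|,|\mathcal A|)$. The matrix $P\in\mathbb R^{|\mathcal S||\mathcal A|\times|\mathcal S|}$ has row $(s,a)$ equal to $P(\cdot\mid s,a)$, and $R\in\mathbb R^{|\mathcal S||\mathcal A|}$ has entries $R(s,a)$. A stochastic policy is a map $\mu:\mathcal S\to\Delta_{|\mathcal A|}$, where $\Delta_n$ is the probability simplex in $\mathbb R^n$. The set $\Theta$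 is the finite set of deterministic stationary policies $\pi:\mathcal S\to\mathcal A$; each is identified with the stochastic policy putting mass $1$ on $\pi(s)$. For a stochastic policy $\mu$, $\Pi^\mu\in\mathbb R^{|\mathcal S|\times|\mathcal S||\mathcal A|}$ is the matrix with entry $\mu(a\mid s)$ in row $s$ and column $(s,a)$, and zeros elsewhere. The feature matrix $\Phi\in\mathbb R^{|\mathcal S||\mathcal A|\times m}$ has full column rank and rows $\phi(s,a)^\top$. For $\theta\in\mathbb R^m$, $V_\theta\in\mathbb R^{|\mathcal S|}$ is defined by $V_\theta(s)=\max_{a}\phi(s,a)^\top\theta$. The sampling distribution $d$ on $\mathcal S\times\mathcal A$ satisfies $d(s,a)>0$ for all $(s,a)$, and $D=\mathrm{diag}(d(s,a))$ in the same ordering. The step size is $\alpha\in(0,1)$. Define the projected Bellman residual $g(\theta):=\Phi^\top D(R+\gamma PV_\theta-\Phi\theta)$ and the map $T_\alpha(\theta):=\theta+\alpha g(\theta)$. A projected Bellman fixed point is a $\theta^\star$ with $g(\theta^\star)=0$. For a stochastic policy $\mu$, define $A_\mu:=I-\alpha\Phi^\top D\Phi+\alpha\gamma\Phi^\top DP\Pi^\mu\Phi\in\mathbb R^{m\times m}$, and let $\mathcal A_\alpha:=\{A_\pi:\pi\in\Theta\}$. The joint spectral radius of a bounded set $\mathcal H$ of square matrices is $\mathrm{JSR}(\mathcal H):=\lim_{k\to\infty}\sup_{B_1,\dots,B_k\in\mathcal H}\|B_k\cdots B_1\|^{1/k}$. Set $\rho_\alpha^{\mathrm{dir}}:=\mathrm{JSR}(\mathcal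 A_\alpha)$. *)

theory Defs
  imports "HOL-Analysis.Analysis"
begin

(* State-action pairs are the finite type ('s \<times> 'a); the paper's particular
   ordering of state-action vectors is immaterial for type-indexed vectors. *)

definition Rvec :: "('s::finite \<Rightarrow> 'a::finite \<Rightarrow> 's \<Rightarrow> real) \<Rightarrow> ('s \<Rightarrow> 'a \<Rightarrow> 's \<Rightarrow> real) \<Rightarrow> real^('s \<times> 'a)"
  where "Rvec P r = (\<chi> sa. \<Sum>s'\<in>UNIV. P (fst sa) (snd sa) s' * r (fst sa) (snd sa) s')"

definition Pmat :: "('s::finite \<Rightarrow> 'a::finite \<Rightarrow> 's \<Rightarrow> real) \<Rightarrow> real^'s^('s \<times> 'a)"
  where "Pmat P = (\<chi> sa s'. P (fst sa) (snd sa) s')"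

definition Dmat :: "('s::finite \<times> 'a::finite \<Rightarrow> real) \<Rightarrow> real^('s \<times> 'a)^('s \<times> 'a)"
  where "Dmat d = (\<chi> i j. if i = j then d i else 0)"

definition Vtheta :: "real^'m::finite^('s::finite \<times> 'a::finite) \<Rightarrow> real^'m \<Rightarrow> real^'s"
  where "Vtheta Phi \<theta> = (\<chi> s. Max ((\<lambda>a. (Phi $ (s, a)) \<bullet> \<theta>) ` UNIV))"

definition gres :: "('s::finite \<Rightarrow> 'a::finite \<Rightarrow> 's \<Rightarrow> real) \<Rightarrow> ('s \<Rightarrow> 'a \<Rightarrow> 's \<Rightarrow> real) \<Rightarrow> real
    \<Rightarrow> real^'m::finite^('s \<times> 'a) \<Rightarrow> ('s \<times> 'a \<Rightarrow> real) \<Rightarrow> real^'m \<Rightarrow> real^'m"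
  where "gres P r \<gamma> Phi d \<theta> =
    transpose Phi *v (Dmat d *v (Rvec P r + \<gamma> *\<^sub>R (Pmat P *v Vtheta Phi \<theta>) - Phi *v \<theta>))"

definition Talpha :: "('s::finite \<Rightarrow> 'a::finite \<Rightarrow> 's \<Rightarrow> real) \<Rightarrow> ('s \<Rightarrow> 'a \<Rightarrow> 's \<Rightarrow> real) \<Rightarrow> real
    \<Rightarrow> real^'m::finite^('s \<times> 'a) \<Rightarrow> ('s \<times> 'a \<Rightarrow> real) \<Rightarrow> real \<Rightarrow> real^'m \<Rightarrow> real^'m"
  where "Talpha P r \<gamma> Phi d \<alpha> \<theta> = \<theta> + \<alpha> *\<^sub>R gres P r \<gamma> Phi d \<theta>"

(* stochastic policy mu: mu s a = mu(a|s) *)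
definition stoch_policy :: "('s \<Rightarrow> 'a::finite \<Rightarrow> real) \<Rightarrow> bool"
  where "stoch_policy \<mu> \<longleftrightarrow> (\<forall>s a. 0 \<le> \<mu> s a) \<and> (\<forall>s. (\<Sum>a\<in>UNIV. \<mu> s a) = 1)"

definition det_policy :: "('s \<Rightarrow> 'a) \<Rightarrow> 's \<Rightarrow> 'a \<Rightarrow> real"
  where "det_policy \<pi> = (\<lambda>s a. if a = \<pi> s then 1 else 0)"

definition Pimat :: "('s::finite \<Rightarrow> 'a::finite \<Rightarrow> real) \<Rightarrow> real^('s \<times> 'a)^'s"
  where "Pimat \<mu> = (\<chi> s sa. if fst sa = s then \<mu> s (snd sa) else 0)"

definition Amat :: "('s::finite \<Rightarrow> 'a::finite \<Rightarrow> 's \<Rightarrow> real) \<Rightarrow> real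
    \<Rightarrow> real^'m::finite^('s \<times> 'a) \<Rightarrow> ('s \<times> 'a \<Rightarrow> real) \<Rightarrow> real \<Rightarrow> ('s \<Rightarrow> 'a \<Rightarrow> real) \<Rightarrow> real^'m^'m"
  where "Amat P \<gamma> Phi d \<alpha> \<mu> =
    mat 1 - \<alpha> *\<^sub>R (transpose Phi ** Dmat d ** Phi)
          + (\<alpha> * \<gamma>) *\<^sub>R (transpose Phi ** Dmat d ** Pmat P ** Pimat \<mu> ** Phi)"

definition Aset :: "('s::finite \<Rightarrow> 'a::finite \<Rightarrow> 's \<Rightarrow> real) \<Rightarrow> real
    \<Rightarrow> real^'m::finite^('s \<times> 'a) \<Rightarrow> ('s \<times> 'a \<Rightarrow> real) \<Rightarrow> real \<Rightarrow> (real^'m^'m) set"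
  where "Aset P \<gamma> Phi d \<alpha> = (\<lambda>\<pi>. Amat P \<gamma> Phi d \<alpha> (det_policy \<pi>)) ` (UNIV :: ('s \<Rightarrow> 'a) set)"

(* product of a list [B_1, ..., B_k] in the order B_k ** ... ** B_1 *)
definition mprod :: "(real^'n::finite^'n) list \<Rightarrow> real^'n^'n"
  where "mprod Bs = foldl (\<lambda>acc B. B ** acc) (mat 1) Bs"

(* joint spectral radius, with the operator norm induced by the Euclidean norm *)
definition JSR :: "(real^'n::finite^'n) set \<Rightarrow> real"
  where "JSR H = lim (\<lambda>k. SUP Bs \<in> {Bs. set Bs \<subseteq> H \<and> length Bs = k}.
                           root k (onorm (\<lambda>x. mprod Bs *v x)))"

definition Vt :: "('s::finite \<Rightarrow> 'a::finite \<Rightarrow> 's \<Rightarrow> real) \<Rightarrow> real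
    \<Rightarrow> real^'m::finite^('s \<times> 'a) \<Rightarrow> ('s \<times> 'a \<Rightarrow> real) \<Rightarrow> real \<Rightarrow> real \<Rightarrow> nat \<Rightarrow> real^'m \<Rightarrow> real"
  where "Vt P \<gamma> Phi d \<alpha> \<beta> t x =
    (\<Sum>l\<le>t. inverse \<beta> ^ (2 * l) *
       Max ((\<lambda>\<pi>s. (norm (mprod (map (\<lambda>\<pi>. Amat P \<gamma> Phi d \<alpha> (det_policy \<pi>)) \<pi>s) *v x))\<^sup>2)
            ` {\<pi>s :: ('s \<Rightarrow> 'a) list. length \<pi>s = l}))"

definition Vinf :: "('s::finite \<Rightarrow> 'a::finite \<Rightarrow> 's \<Rightarrow> real) \<Rightarrow> real
    \<Rightarrow> real^'m::finite^('s \<times> 'a) \<Rightarrow> ('s \<times> 'a \<Rightarrow> real) \<Rightarrow> real \<Rightarrow> real \<Rightarrow> real^'m \<Rightarrow> real"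
  where "Vinf P \<gamma> Phi d \<alpha> \<beta> x = lim (\<lambda>t. Vt P \<gamma> Phi d \<alpha> \<beta> t x)"

definition is_norm :: "('v::real_vector \<Rightarrow> real) \<Rightarrow> bool"
  where "is_norm p \<longleftrightarrow> (\<forall>x. 0 \<le> p x) \<and> (\<forall>x. p x = 0 \<longleftrightarrow> x = 0)
     \<and> (\<forall>c x. p (c *\<^sub>R x) = \<bar>c\<bar> * p x) \<and> (\<forall>x y. p (x + y) \<le> p x + p y)"

end

theory Submission
  imports Defs
begin

(* The largest operator norm of a product of l matrices A_pi is submultiplicative in l, so by
   Fekete's lemma the limit defining the joint spectral radius exists, and products of length l
   grow at most like K c^l for some c < beta. Hence the series
     V x = sum_l beta^(-2l) max_(pi_1 ... pi_l) |A_pi_l ... A_pi_1 x|^2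
   converges, lies between |x|^2 and C |x|^2, and, as an l2-sum of seminorms, has a norm as its
   square root. Each A_mu is the convex combination of the A_pi with weights prod_s mu(pi s | s),
   so V (A_mu x) is bounded by the series shifted by one index, beta^2 (V x - |x|^2).
   Moreover T theta - T theta' = A_mu (theta - theta') for a policy mu mixing, state by state,
   the greedy actions at theta and theta'; thus T contracts V by beta^2, a power of T is a
   Euclidean contraction, and Banach's theorem yields the unique projected Bellman fixed point. *)

lemma foldl_mprod: "foldl (\<lambda>acc B. B ** acc) C Bs = mprod Bs ** (C::real^'n::finite^'n)"
proof (induction Bs arbitrary: C)
  case Nil
  then show ?case by (simp add: mprod_def matrix_mul_lid)
next
  case (Cons B Bs)
  have "foldl (\<lambda>acc B. B ** acc) C (B # Bs) = mprod Bs ** (B ** C)" using Cons by simp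
  also have "\<dots> = (mprod Bs ** B) ** C" by (simp add: matrix_mul_assoc)
  also have "mprod Bs ** B = mprod (B # Bs)"
    using Cons[of "B ** mat 1"] by (simp add: mprod_def matrix_mul_rid)
  finally show ?case .
qed

lemma mprod_Nil [simp]: "mprod [] = mat 1"
  by (simp add: mprod_def)

lemma mprod_Cons: "mprod (B # Bs) = mprod Bs ** B"
  using foldl_mprod[of "B ** mat 1" Bs] by (simp add: mprod_def matrix_mul_rid)

lemma mprod_append: "mprod (Bs @ Cs) = mprod Cs ** mprod Bs"
  by (simp add: mprod_def foldl_mprod[of "foldl _ (mat 1) Bs"])

section \<open>Fekete's lemma for submultiplicative sequences\<close>

lemma submultiplicative_le_geometric:
  fixes a :: "nat \<Rightarrow> real"
  assumes nonneg: "\<And>n. 0 \<le> a n" and submult: "\<And>m n. a (m + n) \<le> a m * a n"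
    and "0 < m" "a m \<le> c ^ m" "0 < c"
  shows "\<exists>K>0. \<forall>n. a n \<le> K * c ^ n"
proof -
  define K where "K = max 1 (Max ((\<lambda>r. a r / c ^ r) ` {..<m}))"
  have K_initial: "a r \<le> K * c ^ r" if "r < m" for r
  proof -
    have "a r / c ^ r \<le> K" unfolding K_def using that by (intro max.coboundedI2 Max_ge) auto
    then show ?thesis using \<open>0 < c\<close> by (simp add: divide_le_eq)
  qed
  have "a n \<le> K * c ^ n" for n
  proof (induction n rule: less_induct)
    case (less n)
    show ?case
    proof (cases "n < m")
      case True
      then show ?thesis by (rule K_initial)
    next
      case False
      then obtain k where n: "n = m + k" by (metis le_Suc_ex not_less)
      have "a n \<le> a m * a k" using submult n by simp
      also have "\<dots> \<le> c ^ m * (K * c ^ k)"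
        using n \<open>0 < m\<close> \<open>a m \<le> c ^ m\<close> less.IH[of k] nonneg \<open>0 < c\<close> by (intro mult_mono) auto
      also have "\<dots> = K * c ^ n" by (simp add: n power_add)
      finally show ?thesis .
    qed
  qed
  moreover have "K > 0" unfolding K_def by simp
  ultimately show ?thesis by blast
qed

lemma submultiplicative_root_tendsto_Inf:
  fixes a :: "nat \<Rightarrow> real"
  assumes nonneg: "\<And>n. 0 \<le> a n" and submult: "\<And>m n. a (m + n) \<le> a m * a n"
  shows "(\<lambda>n. root n (a n)) \<longlonglongrightarrow> (INF n\<in>{1..}. root n (a n))"
proof -
  define b where "b n = root n (a n)" for n
  define L where "L = (INF n\<in>{1..}. b n)"
  have b_nonneg: "0 \<le> b n" for n unfolding b_def using nonneg real_root_ge_zero by blast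
  have L_le: "L \<le> b n" if "n \<ge> 1" for n
    unfolding L_def using b_nonneg that by (intro cInf_lower bdd_belowI[of _ 0]) auto
  have L_nonneg: "0 \<le> L" unfolding L_def using b_nonneg by (intro cInf_greatest) auto
  have "b \<longlonglongrightarrow> L"
  proof (rule order_tendstoI)
    fix y assume "y < L"
    then show "\<forall>\<^sub>F n in sequentially. y < b n"
      using L_le by (intro eventually_sequentiallyI[of 1]) (auto intro: less_le_trans)
  next
    fix y assume "L < y"
    define c where "c = (L + y) / 2"
    have "L < c" "c < y" "0 < c" using \<open>L < y\<close> L_nonneg by (auto simp: c_def)
    obtain m where m: "m \<ge> 1" "b m < c"
      using cInf_lessD[of "b ` {1..}" c] \<open>L < c\<close> unfolding L_def by auto
    have "a m = b m ^ m" unfolding b_def using nonneg m by simp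
    also have "\<dots> \<le> c ^ m" using m b_nonneg by (intro power_mono) auto
    finally obtain K where K: "K > 0" "\<forall>n. a n \<le> K * c ^ n"
      using submultiplicative_le_geometric[of a m c, OF nonneg submult] m(1) \<open>0 < c\<close> by auto
    have b_le: "b n \<le> root n K * c" if "n \<ge> 1" for n
    proof -
      have "b n \<le> root n (K * c ^ n)" unfolding b_def using that K by (intro real_root_le_mono) auto
      also have "\<dots> = root n K * c"
        using that \<open>0 < c\<close> by (simp add: real_root_mult real_root_power_cancel)
      finally show ?thesis .
    qed
    have "(\<lambda>n. root n K * c) \<longlonglongrightarrow> 1 * c" by (intro tendsto_intros LIMSEQ_root_const K)
    then have "\<forall>\<^sub>F n in sequentially. root n K * c < y" using \<open>c < y\<close> by (intro order_tendstoD) auto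
    then show "\<forall>\<^sub>F n in sequentially. b n < y"
      using eventually_ge_at_top[of 1] by eventually_elim (use b_le in \<open>auto intro: le_less_trans\<close>)
  qed
  then show ?thesis unfolding b_def L_def .
qed

section \<open>The joint spectral radius of a finite set of matrices\<close>

definition max_prod_norm :: "(real^'n::finite^'n) set \<Rightarrow> nat \<Rightarrow> real" where
  "max_prod_norm H k = Max ((\<lambda>Bs. onorm (\<lambda>x. mprod Bs *v x)) ` {Bs. set Bs \<subseteq> H \<and> length Bs = k})"

context
  fixes H :: "(real^'n::finite^'n) set"
  assumes finite_H: "finite H" and H_nonempty: "H \<noteq> {}"
begin

lemma finite_words_of_length: "finite {Bs. set Bs \<subseteq> H \<and> length Bs = k}"
  using finite_lists_length_eq[OF finite_H] .

lemma words_of_length_nonempty: "{Bs. set Bs \<subseteq> H \<and> length Bs = k} \<noteq> {}"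
proof -
  obtain h where "h \<in> H" using H_nonempty by auto
  then show ?thesis by (auto intro!: exI[of _ "replicate k h"])
qed

lemma onorm_mprod_le_max_prod_norm:
  "set Bs \<subseteq> H \<Longrightarrow> onorm (\<lambda>x. mprod Bs *v x) \<le> max_prod_norm H (length Bs)"
  unfolding max_prod_norm_def by (rule Max_ge) (use finite_words_of_length in auto)

lemma max_prod_norm_attained:
  "\<exists>Bs. set Bs \<subseteq> H \<and> length Bs = k \<and> max_prod_norm H k = onorm (\<lambda>x. mprod Bs *v x)"
proof -
  have "max_prod_norm H k \<in> (\<lambda>Bs. onorm (\<lambda>x. mprod Bs *v x)) ` {Bs. set Bs \<subseteq> H \<and> length Bs = k}"
    unfolding max_prod_norm_def by (rule Max_in) (use finite_words_of_length words_of_length_nonempty in auto)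
  then show ?thesis by auto
qed

lemma max_prod_norm_nonneg: "0 \<le> max_prod_norm H k"
  using max_prod_norm_attained[of k] onorm_pos_le[OF matrix_vector_mul_bounded_linear] by metis

lemma max_prod_norm_submult: "max_prod_norm H (m + n) \<le> max_prod_norm H m * max_prod_norm H n"
proof -
  obtain Bs where Bs: "set Bs \<subseteq> H" "length Bs = m + n"
    and eq: "max_prod_norm H (m + n) = onorm (\<lambda>x. mprod Bs *v x)"
    using max_prod_norm_attained by blast
  let ?X = "take m Bs" and ?Y = "drop m Bs"
  have "mprod Bs = mprod ?Y ** mprod ?X" by (metis append_take_drop_id mprod_append)
  then have "(\<lambda>x. mprod Bs *v x) = (\<lambda>x. mprod ?Y *v x) \<circ> (\<lambda>x. mprod ?X *v x)"
    by (auto simp: matrix_vector_mul_assoc)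
  then have "max_prod_norm H (m + n) \<le> onorm (\<lambda>x. mprod ?Y *v x) * onorm (\<lambda>x. mprod ?X *v x)"
    using eq onorm_compose[OF matrix_vector_mul_bounded_linear matrix_vector_mul_bounded_linear] by metis
  also have "\<dots> \<le> max_prod_norm H n * max_prod_norm H m"
  proof (rule mult_mono)
    have "set ?Y \<subseteq> H" "set ?X \<subseteq> H" using Bs(1) set_take_subset[of m Bs] set_drop_subset[of m Bs] by blast+
    moreover have "length ?Y = n" "length ?X = m" using Bs(2) by auto
    ultimately show "onorm (\<lambda>x. mprod ?Y *v x) \<le> max_prod_norm H n"
      "onorm (\<lambda>x. mprod ?X *v x) \<le> max_prod_norm H m"
      using onorm_mprod_le_max_prod_norm[of ?Y] onorm_mprod_le_max_prod_norm[of ?X] by auto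
  qed (use onorm_pos_le[OF matrix_vector_mul_bounded_linear] max_prod_norm_nonneg in auto)
  finally show ?thesis by (simp add: mult.commute)
qed

lemma root_max_prod_norm_tendsto_JSR: "(\<lambda>k. root k (max_prod_norm H k)) \<longlonglongrightarrow> JSR H"
proof -
  have sup_eq: "(SUP Bs \<in> {Bs. set Bs \<subseteq> H \<and> length Bs = k}. root k (onorm (\<lambda>x. mprod Bs *v x)))
      = root k (max_prod_norm H k)" for k
  proof -
    have "mono (root k)" by (cases "k = 0") (auto simp: mono_def intro: real_root_le_mono)
    then show ?thesis unfolding max_prod_norm_def
      by (subst mono_Max_commute) (use finite_words_of_length words_of_length_nonempty in \<open>auto simp: image_image intro!: cSup_eq_Max\<close>)
  qed
  have "(\<lambda>k. root k (max_prod_norm H k)) \<longlonglongrightarrow> (INF n\<in>{1..}. root n (max_prod_norm H n))"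
    by (rule submultiplicative_root_tendsto_Inf) (auto simp: max_prod_norm_nonneg max_prod_norm_submult)
  then show ?thesis unfolding JSR_def sup_eq by (simp add: limI)
qed

lemma JSR_nonneg: "0 \<le> JSR H"
  by (rule LIMSEQ_le_const[OF root_max_prod_norm_tendsto_JSR])
     (use max_prod_norm_nonneg real_root_ge_zero in blast)

lemma max_prod_norm_le_geometric:
  assumes "JSR H < \<beta>"
  shows "\<exists>K c. 0 < c \<and> c < \<beta> \<and> 0 < K \<and> (\<forall>n. max_prod_norm H n \<le> K * c ^ n)"
proof -
  define c where "c = (JSR H + \<beta>) / 2"
  have c: "JSR H < c" "c < \<beta>" "0 < c" using assms JSR_nonneg by (auto simp: c_def)
  have "\<forall>\<^sub>F k in sequentially. k \<ge> 1 \<and> root k (max_prod_norm H k) < c"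
    using eventually_ge_at_top order_tendstoD(2)[OF root_max_prod_norm_tendsto_JSR c(1)]
    by (rule eventually_conj)
  then obtain m where m: "m \<ge> 1" "root m (max_prod_norm H m) < c"
    using eventually_sequentially by auto
  have "max_prod_norm H m = root m (max_prod_norm H m) ^ m"
    using m(1) max_prod_norm_nonneg[of m] by simp
  also have "\<dots> \<le> c ^ m" using m max_prod_norm_nonneg[of m] by (intro power_mono) auto
  finally obtain K where "K > 0" "\<forall>n. max_prod_norm H n \<le> K * c ^ n"
    using submultiplicative_le_geometric[of "max_prod_norm H" m c, OF max_prod_norm_nonneg max_prod_norm_submult]
      m(1) c(3) by auto
  then show ?thesis using c by blast
qed

end

section \<open>The extremal Lyapunov function of a switched linear system\<close>

definition max_orbit_sq :: "('p::finite \<Rightarrow> real^'m::finite^'m) \<Rightarrow> nat \<Rightarrow> real^'m \<Rightarrow> real" where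
  "max_orbit_sq A l x = Max ((\<lambda>\<pi>s. (norm (mprod (map A \<pi>s) *v x))\<^sup>2) ` {\<pi>s :: 'p list. length \<pi>s = l})"

lemma finite_lists_of_length: "finite {xs :: 'p::finite list. length xs = l}"
  using finite_lists_length_eq[of "UNIV::'p set" l] by simp

lemma lists_of_length_nonempty: "{xs :: 'p list. length xs = l} \<noteq> {}"
  by (auto intro!: exI[of _ "replicate l undefined"])

lemma max_orbit_sq_ge: "length \<pi>s = l \<Longrightarrow> (norm (mprod (map A \<pi>s) *v x))\<^sup>2 \<le> max_orbit_sq A l x"
  unfolding max_orbit_sq_def by (rule Max_ge) (use finite_lists_of_length in auto)

lemma max_orbit_sq_attained: "\<exists>\<pi>s. length \<pi>s = l \<and> max_orbit_sq A l x = (norm (mprod (map A \<pi>s) *v x))\<^sup>2"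
proof -
  have "max_orbit_sq A l x \<in> (\<lambda>\<pi>s. (norm (mprod (map A \<pi>s) *v x))\<^sup>2) ` {\<pi>s. length \<pi>s = l}"
    unfolding max_orbit_sq_def
    by (rule Max_in) (use finite_lists_of_length lists_of_length_nonempty in auto)
  then show ?thesis by auto
qed

lemma max_orbit_sq_nonneg: "0 \<le> max_orbit_sq A l x"
  using max_orbit_sq_attained[of l A x] by auto

lemma max_orbit_sq_0: "max_orbit_sq A 0 x = (norm x)\<^sup>2"
  using max_orbit_sq_attained[of 0 A x] by (auto simp: matrix_vector_mul_lid)

lemma max_orbit_sq_le_iff:
  "max_orbit_sq A l x \<le> c \<longleftrightarrow> (\<forall>\<pi>s. length \<pi>s = l \<longrightarrow> (norm (mprod (map A \<pi>s) *v x))\<^sup>2 \<le> c)"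
  using max_orbit_sq_attained[of l A x] max_orbit_sq_ge[of _ l A x] by (metis order_trans)

lemma max_orbit_sq_scaleR: "max_orbit_sq A l (c *\<^sub>R x) = c\<^sup>2 * max_orbit_sq A l x"
proof -
  have "max_orbit_sq A l (c *\<^sub>R x)
      = Max ((\<lambda>y. c\<^sup>2 * y) ` (\<lambda>\<pi>s. (norm (mprod (map A \<pi>s) *v x))\<^sup>2) ` {\<pi>s. length \<pi>s = l})"
    unfolding max_orbit_sq_def image_image
    by (simp add: matrix_vector_mult_scaleR power_mult_distrib)
  also have "\<dots> = c\<^sup>2 * max_orbit_sq A l x" unfolding max_orbit_sq_def
    by (rule mono_Max_commute[symmetric])
       (use finite_lists_of_length lists_of_length_nonempty in \<open>auto simp: mono_def mult_left_mono\<close>)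
  finally show ?thesis .
qed

lemma sqrt_max_orbit_sq_triangle:
  "sqrt (max_orbit_sq A l (x + y)) \<le> sqrt (max_orbit_sq A l x) + sqrt (max_orbit_sq A l y)"
proof -
  obtain \<pi>s where \<pi>s: "length \<pi>s = l"
    and eq: "max_orbit_sq A l (x + y) = (norm (mprod (map A \<pi>s) *v (x + y)))\<^sup>2"
    using max_orbit_sq_attained by blast
  let ?M = "mprod (map A \<pi>s)"
  have "sqrt (max_orbit_sq A l (x + y)) = norm (?M *v x + ?M *v y)"
    using eq by (simp add: matrix_vector_right_distrib)
  also have "\<dots> \<le> norm (?M *v x) + norm (?M *v y)" by (rule norm_triangle_ineq)
  also have "norm (?M *v x) \<le> sqrt (max_orbit_sq A l x)"
    using real_sqrt_le_mono[OF max_orbit_sq_ge[OF \<pi>s, of A x]] by simp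
  also have "norm (?M *v y) \<le> sqrt (max_orbit_sq A l y)"
    using real_sqrt_le_mono[OF max_orbit_sq_ge[OF \<pi>s, of A y]] by simp
  finally show ?thesis by simp
qed

lemma max_orbit_sq_le_max_prod_norm: "max_orbit_sq A l x \<le> (max_prod_norm (range A) l)\<^sup>2 * (norm x)\<^sup>2"
  unfolding max_orbit_sq_le_iff
proof (intro allI impI)
  fix \<pi>s :: "'a list" assume "length \<pi>s = l"
  let ?M = "mprod (map A \<pi>s)"
  have "norm (?M *v x) \<le> onorm (\<lambda>x. ?M *v x) * norm x" by (rule onorm) simp
  also have "\<dots> \<le> max_prod_norm (range A) l * norm x"
    using onorm_mprod_le_max_prod_norm[of "range A" "map A \<pi>s"] \<open>length \<pi>s = l\<close>
    by (intro mult_right_mono) auto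
  finally show "(norm (?M *v x))\<^sup>2 \<le> (max_prod_norm (range A) l)\<^sup>2 * (norm x)\<^sup>2"
    by (simp add: power_mult_distrib[symmetric] power_mono)
qed

lemma max_orbit_sq_convex_combination:
  fixes w :: "'p::finite \<Rightarrow> real"
  assumes "\<And>\<pi>. 0 \<le> w \<pi>" "(\<Sum>\<pi>\<in>UNIV. w \<pi>) = 1"
  shows "max_orbit_sq A l (\<Sum>\<pi>\<in>UNIV. w \<pi> *\<^sub>R (A \<pi> *v x)) \<le> max_orbit_sq A (Suc l) x"
  unfolding max_orbit_sq_le_iff
proof (intro allI impI)
  fix \<pi>s :: "'p list" assume len: "length \<pi>s = l"
  let ?M = "mprod (map A \<pi>s)" and ?S = "sqrt (max_orbit_sq A (Suc l) x)"
  have "norm (?M *v (\<Sum>\<pi>\<in>UNIV. w \<pi> *\<^sub>R (A \<pi> *v x))) \<le> (\<Sum>\<pi>\<in>UNIV. norm (w \<pi> *\<^sub>R (?M *v (A \<pi> *v x))))"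
    by (simp add: vec.sum matrix_vector_mult_scaleR norm_sum del: norm_scaleR)
  also have "\<dots> \<le> (\<Sum>\<pi>\<in>UNIV. w \<pi> * ?S)"
  proof (rule sum_mono)
    fix \<pi>
    have "(norm (mprod (map A (\<pi> # \<pi>s)) *v x))\<^sup>2 \<le> max_orbit_sq A (Suc l) x"
      by (rule max_orbit_sq_ge) (simp add: len)
    then have "norm (?M *v (A \<pi> *v x)) \<le> ?S"
      by (simp add: mprod_Cons matrix_vector_mul_assoc real_le_rsqrt)
    then show "norm (w \<pi> *\<^sub>R (?M *v (A \<pi> *v x))) \<le> w \<pi> * ?S"
      using assms(1) by (simp add: mult_left_mono)
  qed
  also have "\<dots> = ?S" using assms(2) by (simp add: sum_distrib_right[symmetric])
  finally have "(norm (?M *v (\<Sum>\<pi>\<in>UNIV. w \<pi> *\<^sub>R (A \<pi> *v x))))\<^sup>2 \<le> ?S\<^sup>2"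
    by (rule power_mono) simp
  then show "(norm (?M *v (\<Sum>\<pi>\<in>UNIV. w \<pi> *\<^sub>R (A \<pi> *v x))))\<^sup>2 \<le> max_orbit_sq A (Suc l) x"
    by (simp add: max_orbit_sq_nonneg)
qed

lemma sqrt_suminf_triangle:
  fixes f g h :: "nat \<Rightarrow> real"
  assumes "summable f" "summable g" "summable h"
    and "\<And>l. 0 \<le> f l" "\<And>l. 0 \<le> g l" "\<And>l. 0 \<le> h l"
    and h_le: "\<And>l. sqrt (h l) \<le> sqrt (f l) + sqrt (g l)"
  shows "sqrt (suminf h) \<le> sqrt (suminf f) + sqrt (suminf g)"
proof -
  have L2_le: "L2_set (\<lambda>l. sqrt (u l)) {..<n} \<le> sqrt (suminf u)"
    if "summable u" "\<And>l. 0 \<le> u l" for u :: "nat \<Rightarrow> real" and n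
    unfolding L2_set_def using that by (simp add: sum_le_suminf real_sqrt_le_mono)
  have "sum h {..<n} \<le> (sqrt (suminf f) + sqrt (suminf g))\<^sup>2" for n
  proof -
    have "sum h {..<n} \<le> (\<Sum>l<n. (sqrt (f l) + sqrt (g l))\<^sup>2)"
    proof (rule sum_mono)
      fix l
      have "(sqrt (h l))\<^sup>2 \<le> (sqrt (f l) + sqrt (g l))\<^sup>2"
        using h_le by (rule power_mono) (simp add: assms(6))
      then show "h l \<le> (sqrt (f l) + sqrt (g l))\<^sup>2" using assms(6) by simp
    qed
    also have "\<dots> = (L2_set (\<lambda>l. sqrt (f l) + sqrt (g l)) {..<n})\<^sup>2"
      by (simp add: L2_set_def sum_nonneg)
    also have "\<dots> \<le> (L2_set (\<lambda>l. sqrt (f l)) {..<n} + L2_set (\<lambda>l. sqrt (g l)) {..<n})\<^sup>2"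
      by (intro power_mono L2_set_triangle_ineq L2_set_nonneg)
    also have "\<dots> \<le> (sqrt (suminf f) + sqrt (suminf g))\<^sup>2"
      using assms by (intro power_mono add_mono L2_le add_nonneg_nonneg L2_set_nonneg)
    finally show ?thesis .
  qed
  then have "suminf h \<le> (sqrt (suminf f) + sqrt (suminf g))\<^sup>2"
    using assms(3) by (intro suminf_le_const)
  then show ?thesis
    using assms by (metis add_nonneg_nonneg real_sqrt_ge_zero real_sqrt_le_mono real_sqrt_abs abs_of_nonneg suminf_nonneg)
qed

text \<open>For the family of the \<open>A\<^sub>\<pi>\<close>, \<open>lyapunov\<close> is the \<open>V\<^sub>\<epsilon>\<^sup>\<infinity>\<close> of the statement and the
  partial sums of its series are \<^const>\<open>Vt\<close>.\<close>

definition lyapunov_term :: "('p::finite \<Rightarrow> real^'m::finite^'m) \<Rightarrow> real \<Rightarrow> nat \<Rightarrow> real^'m \<Rightarrow> real" where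
  "lyapunov_term A \<beta> l x = inverse \<beta> ^ (2 * l) * max_orbit_sq A l x"

definition lyapunov :: "('p::finite \<Rightarrow> real^'m::finite^'m) \<Rightarrow> real \<Rightarrow> real^'m \<Rightarrow> real" where
  "lyapunov A \<beta> x = (\<Sum>l. lyapunov_term A \<beta> l x)"

lemma lyapunov_term_nonneg: "0 \<le> lyapunov_term A \<beta> l x"
  by (simp add: lyapunov_term_def power_mult max_orbit_sq_nonneg)

lemma sqrt_lyapunov_term_triangle:
  "sqrt (lyapunov_term A \<beta> l (x + y)) \<le> sqrt (lyapunov_term A \<beta> l x) + sqrt (lyapunov_term A \<beta> l y)"
  using mult_left_mono[OF sqrt_max_orbit_sq_triangle[of A l x y], of "sqrt (inverse \<beta> ^ (2 * l))"]
  by (simp add: lyapunov_term_def real_sqrt_mult distrib_left)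

context
  fixes A :: "'p::finite \<Rightarrow> real^'m::finite^'m" and \<beta> :: real
  assumes JSR_less: "JSR (range A) < \<beta>"
begin

lemma JSR_less_imp_pos: "0 < \<beta>"
  using JSR_nonneg[of "range A"] JSR_less by simp

lemma lyapunov_term_le_geometric:
  "\<exists>K q. 0 \<le> K \<and> 0 \<le> q \<and> q < 1 \<and> (\<forall>l x. lyapunov_term A \<beta> l x \<le> K * (norm x)\<^sup>2 * q ^ l)"
proof -
  obtain K c where c: "0 < c" "c < \<beta>" and "0 < K"
    and bound: "\<forall>n. max_prod_norm (range A) n \<le> K * c ^ n"
    using max_prod_norm_le_geometric[of "range A" \<beta>] JSR_less by auto
  define q where "q = (c / \<beta>)\<^sup>2"
  have "0 \<le> q" "q < 1" using c by (auto simp: q_def power_less_one_iff abs_square_less_1)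
  moreover have "lyapunov_term A \<beta> l x \<le> K\<^sup>2 * (norm x)\<^sup>2 * q ^ l" for l x
  proof -
    have "0 \<le> max_prod_norm (range A) l" by (rule max_prod_norm_nonneg) auto
    then have "(max_prod_norm (range A) l)\<^sup>2 \<le> (K * c ^ l)\<^sup>2"
      using bound by (intro power_mono) auto
    then have "max_orbit_sq A l x \<le> (K * c ^ l)\<^sup>2 * (norm x)\<^sup>2"
      using max_orbit_sq_le_max_prod_norm[of A l x] by (meson order_trans mult_right_mono zero_le_power2)
    then have "lyapunov_term A \<beta> l x \<le> inverse \<beta> ^ (2 * l) * ((K * c ^ l)\<^sup>2 * (norm x)\<^sup>2)"
      unfolding lyapunov_term_def by (intro mult_left_mono) (simp_all add: power_mult)
    also have "\<dots> = K\<^sup>2 * (norm x)\<^sup>2 * q ^ l"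
      by (simp add: q_def power_mult_distrib power_divide power_mult[symmetric] field_simps)
    finally show ?thesis .
  qed
  ultimately show ?thesis by (intro exI[of _ "K\<^sup>2"] exI[of _ q]) auto
qed

lemma summable_lyapunov_term: "summable (\<lambda>l. lyapunov_term A \<beta> l x)"
proof -
  obtain K q where "0 \<le> q" "q < 1" and bound: "\<forall>l x. lyapunov_term A \<beta> l x \<le> K * (norm x)\<^sup>2 * q ^ l"
    using lyapunov_term_le_geometric by blast
  have "summable (\<lambda>l. K * (norm x)\<^sup>2 * q ^ l)"
    using \<open>0 \<le> q\<close> \<open>q < 1\<close> by (intro summable_mult summable_geometric) simp
  then show ?thesis
    by (rule summable_comparison_test') (simp add: bound lyapunov_term_nonneg abs_of_nonneg)
qed

lemma lyapunov_le: "\<exists>C\<ge>1. \<forall>x. lyapunov A \<beta> x \<le> C * (norm x)\<^sup>2"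
proof -
  obtain K q where "0 \<le> K" "0 \<le> q" "q < 1"
    and bound: "\<forall>l x. lyapunov_term A \<beta> l x \<le> K * (norm x)\<^sup>2 * q ^ l"
    using lyapunov_term_le_geometric by blast
  have "lyapunov A \<beta> x \<le> max 1 (K / (1 - q)) * (norm x)\<^sup>2" for x
  proof -
    have geometric: "(\<lambda>l. K * (norm x)\<^sup>2 * q ^ l) sums (K * (norm x)\<^sup>2 * (1 / (1 - q)))"
      using \<open>0 \<le> q\<close> \<open>q < 1\<close> by (intro sums_mult geometric_sums) simp
    have "lyapunov A \<beta> x \<le> K * (norm x)\<^sup>2 * (1 / (1 - q))"
      unfolding lyapunov_def
      by (rule suminf_le[OF _ summable_lyapunov_term sums_summable[OF geometric], unfolded sums_unique[OF geometric, symmetric]])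
         (use bound in auto)
    also have "\<dots> = K / (1 - q) * (norm x)\<^sup>2" by simp
    also have "\<dots> \<le> max 1 (K / (1 - q)) * (norm x)\<^sup>2" by (intro mult_right_mono) auto
    finally show ?thesis .
  qed
  then show ?thesis by (intro exI[of _ "max 1 (K / (1 - q))"]) auto
qed

lemma lyapunov_eq_norm_sq_plus: "lyapunov A \<beta> x = (norm x)\<^sup>2 + (\<Sum>l. lyapunov_term A \<beta> (Suc l) x)"
  unfolding lyapunov_def suminf_split_head[OF summable_lyapunov_term]
  by (simp add: lyapunov_term_def max_orbit_sq_0)

lemma summable_lyapunov_term_Suc: "summable (\<lambda>l. lyapunov_term A \<beta> (Suc l) x)"
  by (rule summable_Suc_iff[THEN iffD2, OF summable_lyapunov_term])

lemma norm_sq_le_lyapunov: "(norm x)\<^sup>2 \<le> lyapunov A \<beta> x"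
proof -
  have "0 \<le> (\<Sum>l. lyapunov_term A \<beta> (Suc l) x)"
    by (rule suminf_nonneg[OF summable_lyapunov_term_Suc lyapunov_term_nonneg])
  then show ?thesis unfolding lyapunov_eq_norm_sq_plus by simp
qed

lemma lyapunov_nonneg: "0 \<le> lyapunov A \<beta> x"
  using norm_sq_le_lyapunov[of x] zero_le_power2 order_trans by blast

lemma lyapunov_scaleR: "lyapunov A \<beta> (c *\<^sub>R x) = c\<^sup>2 * lyapunov A \<beta> x"
  unfolding lyapunov_def lyapunov_term_def max_orbit_sq_scaleR
  using suminf_mult[OF summable_lyapunov_term[of x, unfolded lyapunov_term_def], of "c\<^sup>2"]
  by (simp add: algebra_simps)

lemma lyapunov_eq_0_iff: "lyapunov A \<beta> x = 0 \<longleftrightarrow> x = 0"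
  using norm_sq_le_lyapunov[of x] lyapunov_scaleR[of 0 0] by auto

lemma partial_sums_tendsto_lyapunov: "(\<lambda>t. \<Sum>l\<le>t. lyapunov_term A \<beta> l x) \<longlonglongrightarrow> lyapunov A \<beta> x"
  unfolding lyapunov_def by (rule summable_LIMSEQ'[OF summable_lyapunov_term])

lemma is_norm_sqrt_lyapunov: "is_norm (\<lambda>x. sqrt (lyapunov A \<beta> x))"
  unfolding is_norm_def
proof (intro conjI allI)
  fix x y :: "real^'m" and c :: real
  show "0 \<le> sqrt (lyapunov A \<beta> x)" "sqrt (lyapunov A \<beta> x) = 0 \<longleftrightarrow> x = 0"
    by (simp_all add: lyapunov_nonneg lyapunov_eq_0_iff)
  show "sqrt (lyapunov A \<beta> (c *\<^sub>R x)) = \<bar>c\<bar> * sqrt (lyapunov A \<beta> x)"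
    by (simp add: lyapunov_scaleR real_sqrt_mult)
  show "sqrt (lyapunov A \<beta> (x + y)) \<le> sqrt (lyapunov A \<beta> x) + sqrt (lyapunov A \<beta> y)"
    unfolding lyapunov_def
    by (intro sqrt_suminf_triangle summable_lyapunov_term lyapunov_term_nonneg sqrt_lyapunov_term_triangle)
qed

lemma lyapunov_convex_combination:
  fixes w :: "'p \<Rightarrow> real"
  assumes "\<And>\<pi>. 0 \<le> w \<pi>" "(\<Sum>\<pi>\<in>UNIV. w \<pi>) = 1"
  shows "lyapunov A \<beta> (\<Sum>\<pi>\<in>UNIV. w \<pi> *\<^sub>R (A \<pi> *v x)) \<le> \<beta>\<^sup>2 * (lyapunov A \<beta> x - (norm x)\<^sup>2)"
proof -
  let ?y = "\<Sum>\<pi>\<in>UNIV. w \<pi> *\<^sub>R (A \<pi> *v x)"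
  have "lyapunov_term A \<beta> l ?y \<le> \<beta>\<^sup>2 * lyapunov_term A \<beta> (Suc l) x" for l
  proof -
    have "lyapunov_term A \<beta> l ?y \<le> inverse \<beta> ^ (2 * l) * max_orbit_sq A (Suc l) x"
      unfolding lyapunov_term_def using max_orbit_sq_convex_combination[OF assms]
      by (intro mult_left_mono) (simp_all add: power_mult)
    also have "\<dots> = \<beta>\<^sup>2 * lyapunov_term A \<beta> (Suc l) x"
      unfolding lyapunov_term_def using JSR_less_imp_pos by (simp add: power2_eq_square field_simps)
    finally show ?thesis .
  qed
  then have "lyapunov A \<beta> ?y \<le> (\<Sum>l. \<beta>\<^sup>2 * lyapunov_term A \<beta> (Suc l) x)"
    unfolding lyapunov_def by (intro suminf_le summable_lyapunov_term summable_mult summable_lyapunov_term_Suc)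
  also have "\<dots> = \<beta>\<^sup>2 * (lyapunov A \<beta> x - (norm x)\<^sup>2)"
    using suminf_mult[OF summable_lyapunov_term_Suc] lyapunov_eq_norm_sq_plus[of x] by simp
  finally show ?thesis .
qed

end

section \<open>Stochastic policies as mixtures of deterministic ones\<close>

text \<open>A stochastic policy is the mixture of the deterministic policies \<open>\<pi>\<close> in which each
  \<open>\<pi> s\<close> is drawn independently from \<open>\<mu> s\<close>.\<close>

definition policy_weight :: "('s::finite \<Rightarrow> 'a \<Rightarrow> real) \<Rightarrow> ('s \<Rightarrow> 'a) \<Rightarrow> real" where
  "policy_weight \<mu> \<pi> = (\<Prod>s\<in>UNIV. \<mu> s (\<pi> s))"

lemma policy_weight_nonneg: "(\<And>s a. 0 \<le> \<mu> s a) \<Longrightarrow> 0 \<le> policy_weight \<mu> \<pi>"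
  unfolding policy_weight_def by (intro prod_nonneg) auto

lemma sum_policy_weight_mult:
  fixes \<mu> :: "'s::finite \<Rightarrow> 'a::finite \<Rightarrow> real"
  assumes "\<And>t. (\<Sum>a\<in>UNIV. \<mu> t a) = 1"
  shows "(\<Sum>\<pi>\<in>UNIV. policy_weight \<mu> \<pi> * f (\<pi> s)) = (\<Sum>a\<in>UNIV. \<mu> s a * f a)"
proof -
  define g where "g t a = \<mu> t a * (if t = s then f a else 1)" for t a
  have "(\<Sum>\<pi>\<in>UNIV. policy_weight \<mu> \<pi> * f (\<pi> s)) = (\<Sum>\<pi>\<in>PiE UNIV (\<lambda>_. UNIV). \<Prod>t\<in>UNIV. g t (\<pi> t))"
    unfolding policy_weight_def g_def prod.distrib by (simp add: prod.delta)
  also have "\<dots> = (\<Prod>t\<in>UNIV. \<Sum>a\<in>UNIV. g t a)"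
    by (rule prod_sum_PiE[symmetric]) auto
  also have "\<dots> = (\<Prod>t\<in>UNIV. if t = s then (\<Sum>a\<in>UNIV. \<mu> s a * f a) else 1)"
    by (rule prod.cong) (auto simp: g_def assms)
  also have "\<dots> = (\<Sum>a\<in>UNIV. \<mu> s a * f a)" by (simp add: prod.delta)
  finally show ?thesis .
qed

lemma sum_policy_weight:
  fixes \<mu> :: "'s::finite \<Rightarrow> 'a::finite \<Rightarrow> real"
  assumes "\<And>t. (\<Sum>a\<in>UNIV. \<mu> t a) = 1"
  shows "(\<Sum>\<pi>\<in>UNIV. policy_weight \<mu> \<pi>) = 1"
  using sum_policy_weight_mult[of \<mu>, OF assms, where f = "\<lambda>_. 1"] assms by simp

lemma Pimat_mult_vec_component: "(Pimat \<mu> *v z) $ s = (\<Sum>a\<in>UNIV. \<mu> s a * z $ (s, a))"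
proof -
  have "(Pimat \<mu> *v z) $ s = (\<Sum>sa\<in>UNIV. if fst sa = s then \<mu> s (snd sa) * z $ (s, snd sa) else 0)"
    unfolding Pimat_def matrix_vector_mult_def by (auto intro!: sum.cong)
  also have "\<dots> = (\<Sum>t\<in>UNIV. \<Sum>a\<in>UNIV. if t = s then \<mu> s a * z $ (s, a) else 0)"
    unfolding sum.cartesian_product UNIV_Times_UNIV by (rule sum.cong) (auto simp: case_prod_beta)
  also have "\<dots> = (\<Sum>t\<in>UNIV. if t = s then (\<Sum>a\<in>UNIV. \<mu> s a * z $ (s, a)) else 0)"
    by (rule sum.cong) auto
  finally show ?thesis by simp
qed

lemma Pimat_det_policy_mult_vec_component: "(Pimat (det_policy \<pi>) *v z) $ s = z $ (s, \<pi> s)"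
proof -
  have "(Pimat (det_policy \<pi>) *v z) $ s = (\<Sum>a\<in>UNIV. if a = \<pi> s then z $ (s, a) else 0)"
    unfolding Pimat_mult_vec_component det_policy_def by (rule sum.cong) auto
  then show ?thesis by simp
qed

lemma Pimat_mult_vec_eq_mixture:
  fixes \<mu> :: "'s::finite \<Rightarrow> 'a::finite \<Rightarrow> real"
  assumes "\<And>t. (\<Sum>a\<in>UNIV. \<mu> t a) = 1"
  shows "Pimat \<mu> *v z = (\<Sum>\<pi>\<in>UNIV. policy_weight \<mu> \<pi> *\<^sub>R (Pimat (det_policy \<pi>) *v z))"
proof -
  have "(\<Sum>\<pi>\<in>UNIV. policy_weight \<mu> \<pi> *\<^sub>R (Pimat (det_policy \<pi>) *v z)) $ s
      = (\<Sum>\<pi>\<in>UNIV. policy_weight \<mu> \<pi> * z $ (s, \<pi> s))" for s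
    by (simp add: sum_component Pimat_det_policy_mult_vec_component)
  moreover have "(\<Sum>\<pi>\<in>UNIV. policy_weight \<mu> \<pi> * z $ (s, \<pi> s)) = (\<Sum>a\<in>UNIV. \<mu> s a * z $ (s, a))" for s
    by (rule sum_policy_weight_mult[of \<mu>, OF assms])
  ultimately show ?thesis
    unfolding vec_eq_iff Pimat_mult_vec_component by simp
qed

lemma Amat_mult_vec: "Amat P \<gamma> Phi d \<alpha> \<mu> *v x = x - \<alpha> *\<^sub>R ((transpose Phi ** Dmat d ** Phi) *v x)
    + (\<alpha> * \<gamma>) *\<^sub>R ((transpose Phi ** Dmat d ** Pmat P) *v (Pimat \<mu> *v (Phi *v x)))"
  unfolding Amat_def
  by (simp add: matrix_vector_mult_add_rdistrib matrix_vector_mult_diff_rdistrib matrix_vector_mul_lid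
      scaleR_matrix_vector_assoc[symmetric] matrix_vector_mul_assoc matrix_mul_assoc)

text \<open>\<open>A\<^sub>\<mu>\<close> is affine in \<open>\<Pi>\<^sup>\<mu>\<close>, so it inherits the mixture representation of \<open>\<Pi>\<^sup>\<mu>\<close>.\<close>

lemma Amat_mult_vec_eq_mixture:
  fixes \<mu> :: "'s::finite \<Rightarrow> 'a::finite \<Rightarrow> real"
  assumes row_sums: "\<And>t. (\<Sum>a\<in>UNIV. \<mu> t a) = 1"
  shows "Amat P \<gamma> Phi d \<alpha> \<mu> *v x
    = (\<Sum>\<pi>\<in>UNIV. policy_weight \<mu> \<pi> *\<^sub>R (Amat P \<gamma> Phi d \<alpha> (det_policy \<pi>) *v x))"
proof -
  let ?w = "policy_weight \<mu>"
  define X where "X = transpose Phi ** Dmat d ** Phi"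
  define Y where "Y = transpose Phi ** Dmat d ** Pmat P"
  have "(\<Sum>\<pi>\<in>UNIV. ?w \<pi> *\<^sub>R (Amat P \<gamma> Phi d \<alpha> (det_policy \<pi>) *v x))
      = (\<Sum>\<pi>\<in>UNIV. ?w \<pi> *\<^sub>R x - \<alpha> *\<^sub>R (?w \<pi> *\<^sub>R (X *v x))
          + (\<alpha> * \<gamma>) *\<^sub>R (Y *v (?w \<pi> *\<^sub>R (Pimat (det_policy \<pi>) *v (Phi *v x)))))"
    unfolding Amat_mult_vec X_def Y_def by (simp add: algebra_simps)
  also have "\<dots> = (\<Sum>\<pi>\<in>UNIV. ?w \<pi>) *\<^sub>R x - \<alpha> *\<^sub>R ((\<Sum>\<pi>\<in>UNIV. ?w \<pi>) *\<^sub>R (X *v x))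
      + (\<alpha> * \<gamma>) *\<^sub>R (Y *v (\<Sum>\<pi>\<in>UNIV. ?w \<pi> *\<^sub>R (Pimat (det_policy \<pi>) *v (Phi *v x))))"
    by (simp add: sum.distrib sum_subtractf scaleR_sum_right[symmetric] scaleR_sum_left[symmetric] vec.sum sum_distrib_left)
  also have "\<dots> = Amat P \<gamma> Phi d \<alpha> \<mu> *v x"
    unfolding Amat_mult_vec X_def Y_def Pimat_mult_vec_eq_mixture[OF row_sums] sum_policy_weight[OF row_sums]
    by simp
  finally show ?thesis ..
qed

lemma Vtheta_component_ge: "Phi $ (s, a) \<bullet> \<theta> \<le> Vtheta Phi \<theta> $ s"
  unfolding Vtheta_def by simp

lemma Vtheta_component_attained: "\<exists>a. Vtheta Phi \<theta> $ s = Phi $ (s, a) \<bullet> \<theta>"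
proof -
  have "Max ((\<lambda>a. Phi $ (s, a) \<bullet> \<theta>) ` UNIV) \<in> (\<lambda>a. Phi $ (s, a) \<bullet> \<theta>) ` UNIV"
    by (rule Max_in) auto
  then obtain a where "Max ((\<lambda>a. Phi $ (s, a) \<bullet> \<theta>) ` UNIV) = Phi $ (s, a) \<bullet> \<theta>" by blast
  then show ?thesis unfolding Vtheta_def by auto
qed

text \<open>At each state the increment of \<open>V\<^sub>\<theta>\<close> lies between the increments along the greedy action
  at \<open>\<theta>'\<close> and along the greedy action at \<open>\<theta>\<close>, so a per-state mixture of the two realises it.\<close>

lemma Vtheta_diff_eq_Pimat:
  fixes Phi :: "real^'m::finite^('s::finite \<times> 'a::finite)"
  shows "\<exists>\<mu>. stoch_policy \<mu> \<and> Pimat \<mu> *v (Phi *v (\<theta> - \<theta>')) = Vtheta Phi \<theta> - Vtheta Phi \<theta>'"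
proof -
  define u where "u s a = Phi $ (s, a) \<bullet> (\<theta> - \<theta>')" for s a
  obtain a1 where a1: "\<And>s. Vtheta Phi \<theta> $ s = Phi $ (s, a1 s) \<bullet> \<theta>"
    using Vtheta_component_attained by metis
  obtain a2 where a2: "\<And>s. Vtheta Phi \<theta>' $ s = Phi $ (s, a2 s) \<bullet> \<theta>'"
    using Vtheta_component_attained by metis
  have "Vtheta Phi \<theta> $ s - Vtheta Phi \<theta>' $ s \<in> closed_segment (u s (a2 s)) (u s (a1 s))" for s
    using Vtheta_component_ge[of Phi s "a1 s" \<theta>'] Vtheta_component_ge[of Phi s "a2 s" \<theta>] a1[of s] a2[of s]
    by (auto simp: closed_segment_eq_real_ivl u_def inner_diff_right)
  then obtain w where w: "\<And>s. 0 \<le> w s" "\<And>s. w s \<le> 1"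
    and mix: "\<And>s. Vtheta Phi \<theta> $ s - Vtheta Phi \<theta>' $ s = (1 - w s) * u s (a2 s) + w s * u s (a1 s)"
    unfolding in_segment by (metis scaleR_conv_of_real of_real_eq_id id_apply)
  define \<mu> where "\<mu> s a = (1 - w s) * (if a = a2 s then 1 else 0) + w s * (if a = a1 s then 1 else 0)" for s a
  have sum_\<mu>: "(\<Sum>a\<in>UNIV. \<mu> s a * f a) = (1 - w s) * f (a2 s) + w s * f (a1 s)" for s f
  proof -
    have "(\<Sum>a\<in>UNIV. \<mu> s a * f a)
        = (\<Sum>a\<in>UNIV. (1 - w s) * (if a = a2 s then f a else 0) + w s * (if a = a1 s then f a else 0))"
      unfolding \<mu>_def by (rule sum.cong) (auto simp: algebra_simps)
    then show ?thesis by (simp add: sum.distrib sum_distrib_left[symmetric])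
  qed
  have "stoch_policy \<mu>"
    unfolding stoch_policy_def using w sum_\<mu>[of _ "\<lambda>_. 1"] by (auto simp: \<mu>_def)
  moreover have "Pimat \<mu> *v (Phi *v (\<theta> - \<theta>')) = Vtheta Phi \<theta> - Vtheta Phi \<theta>'"
    unfolding vec_eq_iff Pimat_mult_vec_component
    by (simp add: matrix_vector_mul_component sum_\<mu> mix u_def)
  ultimately show ?thesis by blast
qed

lemma Talpha_diff_eq_Amat:
  assumes "Pimat \<mu> *v (Phi *v (\<theta> - \<theta>')) = Vtheta Phi \<theta> - Vtheta Phi \<theta>'"
  shows "Talpha P r \<gamma> Phi d \<alpha> \<theta> - Talpha P r \<gamma> Phi d \<alpha> \<theta>' = Amat P \<gamma> Phi d \<alpha> \<mu> *v (\<theta> - \<theta>')"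
proof -
  have "Talpha P r \<gamma> Phi d \<alpha> \<theta> - Talpha P r \<gamma> Phi d \<alpha> \<theta>'
     = (\<theta> - \<theta>') - \<alpha> *\<^sub>R (transpose Phi *v (Dmat d *v (Phi *v (\<theta> - \<theta>'))))
       + (\<alpha> * \<gamma>) *\<^sub>R (transpose Phi *v (Dmat d *v (Pmat P *v (Vtheta Phi \<theta> - Vtheta Phi \<theta>'))))"
    unfolding Talpha_def gres_def by (simp add: algebra_simps)
  also have "\<dots> = Amat P \<gamma> Phi d \<alpha> \<mu> *v (\<theta> - \<theta>')"
    unfolding Amat_mult_vec assms by (simp add: matrix_vector_mul_assoc matrix_mul_assoc)
  finally show ?thesis .
qed

section \<open>Contraction of the projected Bellman operator\<close>

lemma real_sqrt_le_mult_sqrt: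
  assumes "0 \<le> c" "u \<le> c\<^sup>2 * v"
  shows "sqrt u \<le> c * sqrt v"
  using real_sqrt_le_mono[OF assms(2)] assms(1) by (simp add: real_sqrt_mult)

locale lyapunov_contraction =
  fixes T :: "'v::banach \<Rightarrow> 'v" and V :: "'v \<Rightarrow> real" and C \<beta> :: real
  assumes norm_sq_le_V: "\<And>x. (norm x)\<^sup>2 \<le> V x"
    and V_le: "\<And>x. V x \<le> C * (norm x)\<^sup>2"
    and C_nonneg: "0 \<le> C"
    and beta: "0 \<le> \<beta>" "\<beta> < 1"
    and V_contraction: "\<And>x y. V (T x - T y) \<le> \<beta>\<^sup>2 * V (x - y)"
begin

lemma funpow_fixpoint: "T z = z \<Longrightarrow> (T ^^ k) z = z"
  by (induction k) simp_all

lemma V_funpow_diff_le: "V ((T ^^ k) x - (T ^^ k) y) \<le> \<beta> ^ (2 * k) * V (x - y)"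
proof (induction k)
  case 0
  then show ?case by simp
next
  case (Suc k)
  have "V ((T ^^ Suc k) x - (T ^^ Suc k) y) \<le> \<beta>\<^sup>2 * V ((T ^^ k) x - (T ^^ k) y)"
    using V_contraction by simp
  also have "\<dots> \<le> \<beta>\<^sup>2 * (\<beta> ^ (2 * k) * V (x - y))" using Suc by (intro mult_left_mono) auto
  also have "\<dots> = \<beta> ^ (2 * Suc k) * V (x - y)" by (simp add: power_add power2_eq_square)
  finally show ?case .
qed

lemma norm_funpow_diff_le: "norm ((T ^^ k) x - (T ^^ k) y) \<le> sqrt C * \<beta> ^ k * norm (x - y)"
proof -
  have "(norm ((T ^^ k) x - (T ^^ k) y))\<^sup>2 \<le> \<beta> ^ (2 * k) * V (x - y)"
    using norm_sq_le_V V_funpow_diff_le order_trans by blast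
  also have "\<dots> \<le> \<beta> ^ (2 * k) * (C * (norm (x - y))\<^sup>2)" using V_le beta by (intro mult_left_mono) auto
  also have "\<dots> = (sqrt C * \<beta> ^ k * norm (x - y))\<^sup>2"
    using C_nonneg by (simp add: power_mult_distrib power_mult[symmetric] mult_ac)
  finally show ?thesis by (rule power2_le_imp_le) (use C_nonneg beta in auto)
qed

lemma ex1_fixpoint: "\<exists>!z. T z = z"
proof -
  have pos: "0 < sqrt C + 1" using C_nonneg by (simp add: add_nonneg_pos)
  obtain N where "\<beta> ^ N < 1 / (sqrt C + 1)"
    using real_arch_pow_inv[of "1 / (sqrt C + 1)" \<beta>] pos beta(2) by auto
  then have "\<beta> ^ N * (sqrt C + 1) < 1" by (simp only: pos_less_divide_eq[OF pos])
  moreover have "0 \<le> \<beta> ^ N" using beta(1) by simp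
  ultimately have "sqrt C * \<beta> ^ N < 1" by (simp add: algebra_simps)
  then have "\<exists>!z. (T ^^ N) z = z"
    by (intro banach_fix_type[of "sqrt C * \<beta> ^ N"]) (use C_nonneg beta norm_funpow_diff_le in \<open>auto simp: dist_norm\<close>)
  then obtain z where z: "(T ^^ N) z = z" and unique: "\<And>y. (T ^^ N) y = y \<Longrightarrow> y = z"
    by blast
  have "(T ^^ N) (T z) = T z" using z by (metis funpow_swap1)
  then have "T z = z" by (rule unique)
  moreover have "y = z" if "T y = y" for y
    using unique funpow_fixpoint that by blast
  ultimately show ?thesis by blast
qed

lemma convergence_to_fixpoint:
  assumes "T z = z"
  shows "V ((T ^^ k) x - z) \<le> \<beta> ^ (2 * k) * V (x - z)"
    and "norm ((T ^^ k) x - z) \<le> sqrt C * \<beta> ^ k * norm (x - z)"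
    and "bounded_linear L \<Longrightarrow> norm (L ((T ^^ k) x) - L z) \<le> onorm L * sqrt C * \<beta> ^ k * norm (x - z)"
proof -
  show V_le: "V ((T ^^ k) x - z) \<le> \<beta> ^ (2 * k) * V (x - z)"
    and norm_le: "norm ((T ^^ k) x - z) \<le> sqrt C * \<beta> ^ k * norm (x - z)"
    using V_funpow_diff_le[of k x z] norm_funpow_diff_le[of k x z] funpow_fixpoint[OF assms] by simp_all
  assume "bounded_linear L"
  then have "norm (L ((T ^^ k) x) - L z) \<le> onorm L * norm ((T ^^ k) x - z)"
    by (metis linear_diff bounded_linear.linear onorm)
  also have "\<dots> \<le> onorm L * (sqrt C * \<beta> ^ k * norm (x - z))"
    using norm_le onorm_pos_le[OF \<open>bounded_linear L\<close>] by (rule mult_left_mono)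
  finally show "norm (L ((T ^^ k) x) - L z) \<le> onorm L * sqrt C * \<beta> ^ k * norm (x - z)"
    by (simp add: mult.assoc)
qed

end

definition Adet :: "('s::finite \<Rightarrow> 'a::finite \<Rightarrow> 's \<Rightarrow> real) \<Rightarrow> real
    \<Rightarrow> real^'m::finite^('s \<times> 'a) \<Rightarrow> ('s \<times> 'a \<Rightarrow> real) \<Rightarrow> real \<Rightarrow> ('s \<Rightarrow> 'a) \<Rightarrow> real^'m^'m" where
  "Adet P \<gamma> Phi d \<alpha> \<pi> = Amat P \<gamma> Phi d \<alpha> (det_policy \<pi>)"

lemma Aset_eq_range_Adet: "Aset P \<gamma> Phi d \<alpha> = range (Adet P \<gamma> Phi d \<alpha>)"
  by (simp add: Aset_def Adet_def)

lemma Vt_eq_partial_sum: "Vt P \<gamma> Phi d \<alpha> \<beta> t x = (\<Sum>l\<le>t. lyapunov_term (Adet P \<gamma> Phi d \<alpha>) \<beta> l x)"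
  unfolding Vt_def lyapunov_term_def max_orbit_sq_def Adet_def ..

context
  fixes P :: "'s::finite \<Rightarrow> 'a::finite \<Rightarrow> 's \<Rightarrow> real" and \<gamma> \<alpha> \<beta> :: real
    and Phi :: "real^'m::finite^('s \<times> 'a)" and d :: "'s \<times> 'a \<Rightarrow> real"
  assumes JSR_Aset_less: "JSR (Aset P \<gamma> Phi d \<alpha>) < \<beta>"
begin

lemma JSR_range_Adet_less: "JSR (range (Adet P \<gamma> Phi d \<alpha>)) < \<beta>"
  using JSR_Aset_less by (simp add: Aset_eq_range_Adet)

lemma Vt_tendsto_lyapunov: "(\<lambda>t. Vt P \<gamma> Phi d \<alpha> \<beta> t x) \<longlonglongrightarrow> lyapunov (Adet P \<gamma> Phi d \<alpha>) \<beta> x"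
  unfolding Vt_eq_partial_sum by (rule partial_sums_tendsto_lyapunov[OF JSR_range_Adet_less])

lemma Vinf_eq_lyapunov: "Vinf P \<gamma> Phi d \<alpha> \<beta> = lyapunov (Adet P \<gamma> Phi d \<alpha>) \<beta>"
  unfolding Vinf_def by (rule ext) (rule limI[OF Vt_tendsto_lyapunov])

lemma lyapunov_Amat_le:
  assumes "stoch_policy \<mu>"
  shows "lyapunov (Adet P \<gamma> Phi d \<alpha>) \<beta> (Amat P \<gamma> Phi d \<alpha> \<mu> *v x)
    \<le> \<beta>\<^sup>2 * (lyapunov (Adet P \<gamma> Phi d \<alpha>) \<beta> x - (norm x)\<^sup>2)"
proof -
  have nonneg: "\<And>s a. 0 \<le> \<mu> s a" and row_sums: "\<And>s. (\<Sum>a\<in>UNIV. \<mu> s a) = 1"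
    using assms unfolding stoch_policy_def by auto
  have "Amat P \<gamma> Phi d \<alpha> \<mu> *v x = (\<Sum>\<pi>\<in>UNIV. policy_weight \<mu> \<pi> *\<^sub>R (Adet P \<gamma> Phi d \<alpha> \<pi> *v x))"
    unfolding Adet_def by (rule Amat_mult_vec_eq_mixture[OF row_sums])
  then show ?thesis
    using lyapunov_convex_combination[OF JSR_range_Adet_less, of "policy_weight \<mu>" x]
      policy_weight_nonneg[of \<mu>, OF nonneg] sum_policy_weight[of \<mu>, OF row_sums] by simp
qed

lemma lyapunov_Amat_le_beta_sq:
  "stoch_policy \<mu> \<Longrightarrow> lyapunov (Adet P \<gamma> Phi d \<alpha>) \<beta> (Amat P \<gamma> Phi d \<alpha> \<mu> *v x) \<le> \<beta>\<^sup>2 * lyapunov (Adet P \<gamma> Phi d \<alpha>) \<beta> x"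
  by (erule order_trans[OF lyapunov_Amat_le]) (simp add: mult_left_mono)

lemma sqrt_lyapunov_Amat_le:
  "stoch_policy \<mu> \<Longrightarrow> sqrt (lyapunov (Adet P \<gamma> Phi d \<alpha>) \<beta> (Amat P \<gamma> Phi d \<alpha> \<mu> *v x))
    \<le> \<beta> * sqrt (lyapunov (Adet P \<gamma> Phi d \<alpha>) \<beta> x)"
  using JSR_less_imp_pos[OF JSR_range_Adet_less]
  by (intro real_sqrt_le_mult_sqrt lyapunov_Amat_le_beta_sq) auto

lemma lyapunov_Talpha_diff_le:
  "lyapunov (Adet P \<gamma> Phi d \<alpha>) \<beta> (Talpha P r \<gamma> Phi d \<alpha> \<theta> - Talpha P r \<gamma> Phi d \<alpha> \<theta>')
    \<le> \<beta>\<^sup>2 * lyapunov (Adet P \<gamma> Phi d \<alpha>) \<beta> (\<theta> - \<theta>')"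
proof -
  obtain \<mu> where \<mu>: "stoch_policy \<mu>"
    and greedy: "Pimat \<mu> *v (Phi *v (\<theta> - \<theta>')) = Vtheta Phi \<theta> - Vtheta Phi \<theta>'"
    using Vtheta_diff_eq_Pimat by blast
  from greedy have "Talpha P r \<gamma> Phi d \<alpha> \<theta> - Talpha P r \<gamma> Phi d \<alpha> \<theta>' = Amat P \<gamma> Phi d \<alpha> \<mu> *v (\<theta> - \<theta>')"
    by (rule Talpha_diff_eq_Amat)
  with lyapunov_Amat_le_beta_sq[OF \<mu>] show ?thesis by simp
qed

lemma sqrt_lyapunov_Talpha_diff_le:
  "sqrt (lyapunov (Adet P \<gamma> Phi d \<alpha>) \<beta> (Talpha P r \<gamma> Phi d \<alpha> \<theta> - Talpha P r \<gamma> Phi d \<alpha> \<theta>'))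
    \<le> \<beta> * sqrt (lyapunov (Adet P \<gamma> Phi d \<alpha>) \<beta> (\<theta> - \<theta>'))"
  using JSR_less_imp_pos[OF JSR_range_Adet_less]
  by (intro real_sqrt_le_mult_sqrt lyapunov_Talpha_diff_le) auto

end

theorem theorem1:
  fixes P :: "'s::finite \<Rightarrow> 'a::finite \<Rightarrow> 's \<Rightarrow> real"
    and r :: "'s \<Rightarrow> 'a \<Rightarrow> 's \<Rightarrow> real"
    and \<gamma> \<alpha> \<epsilon> :: real
    and Phi :: "real^'m::finite^('s \<times> 'a)"
    and d :: "'s \<times> 'a \<Rightarrow> real"
  assumes P_nonneg: "\<forall>s a s'. 0 \<le> P s a s'"
    and P_sum: "\<forall>s a. (\<Sum>s'\<in>UNIV. P s a s') = 1"
    and gamma: "0 < \<gamma>" "\<gamma> < 1"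
    and Phi_rank: "rank Phi = CARD('m)"
    and d_pos: "\<forall>sa. 0 < d sa"
    and d_sum: "(\<Sum>sa\<in>UNIV. d sa) = 1"
    and alpha: "0 < \<alpha>" "\<alpha> < 1"
    and jsr: "JSR (Aset P \<gamma> Phi d \<alpha>) < 1"
    and eps: "0 < \<epsilon>" "JSR (Aset P \<gamma> Phi d \<alpha>) + \<epsilon> < 1"
  shows "let \<beta> = JSR (Aset P \<gamma> Phi d \<alpha>) + \<epsilon>;
             V = Vinf P \<gamma> Phi d \<alpha> \<beta>;
             p = (\<lambda>x. sqrt (V x));
             T = Talpha P r \<gamma> Phi d \<alpha>;
             g = gres P r \<gamma> Phi d
         in (\<forall>x. convergent (\<lambda>t. Vt P \<gamma> Phi d \<alpha> \<beta> t x))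
          \<and> (\<exists>C\<ge>1.
                (\<forall>x. (norm x)\<^sup>2 \<le> V x \<and> V x \<le> C * (norm x)\<^sup>2)
              \<and> (\<forall>\<theta>s \<theta>0. g \<theta>s = 0 \<longrightarrow> (\<forall>k.
                     V ((T ^^ k) \<theta>0 - \<theta>s) \<le> \<beta> ^ (2 * k) * V (\<theta>0 - \<theta>s)
                   \<and> norm ((T ^^ k) \<theta>0 - \<theta>s) \<le> sqrt C * \<beta> ^ k * norm (\<theta>0 - \<theta>s)
                   \<and> norm (Phi *v (T ^^ k) \<theta>0 - Phi *v \<theta>s)
                       \<le> onorm (\<lambda>y. Phi *v y) * sqrt C * \<beta> ^ k * norm (\<theta>0 - \<theta>s))))
          \<and> is_norm p
          \<and> (\<forall>\<mu> x. stoch_policy \<mu> \<longrightarrow>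
                V (Amat P \<gamma> Phi d \<alpha> \<mu> *v x) \<le> \<beta>\<^sup>2 * (V x - (norm x)\<^sup>2)
              \<and> \<beta>\<^sup>2 * (V x - (norm x)\<^sup>2) \<le> \<beta>\<^sup>2 * V x
              \<and> p (Amat P \<gamma> Phi d \<alpha> \<mu> *v x) \<le> \<beta> * p x)
          \<and> (\<forall>\<theta> \<theta>'. p (T \<theta> - T \<theta>') \<le> \<beta> * p (\<theta> - \<theta>'))
          \<and> (\<exists>!\<theta>s. g \<theta>s = 0)"
proof -
  define \<beta> where "\<beta> = JSR (Aset P \<gamma> Phi d \<alpha>) + \<epsilon>"
  define V where "V = lyapunov (Adet P \<gamma> Phi d \<alpha>) \<beta>"
  define T where "T = Talpha P r \<gamma> Phi d \<alpha>"
  have JSR_less: "JSR (Aset P \<gamma> Phi d \<alpha>) < \<beta>" using eps by (simp add: \<beta>_def)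
  note JSR_range_less = JSR_range_Adet_less[OF JSR_less]
  obtain C where "1 \<le> C" and V_le: "\<And>x. V x \<le> C * (norm x)\<^sup>2"
    using lyapunov_le[OF JSR_range_less] by (auto simp: V_def)
  have norm_sq_le_V: "\<And>x. (norm x)\<^sup>2 \<le> V x" by (simp add: V_def norm_sq_le_lyapunov[OF JSR_range_less])
  have "0 < \<beta>" "\<beta> < 1" using JSR_less_imp_pos[OF JSR_range_less] eps by (auto simp: \<beta>_def)
  interpret lyapunov_contraction T V C \<beta>
    using \<open>1 \<le> C\<close> \<open>0 < \<beta>\<close> \<open>\<beta> < 1\<close> norm_sq_le_V V_le lyapunov_Talpha_diff_le[OF JSR_less]
    by unfold_locales (auto simp: V_def T_def)
  have fixpoint_iff: "gres P r \<gamma> Phi d \<theta> = 0 \<longleftrightarrow> T \<theta> = \<theta>" for \<theta>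
    using alpha by (simp add: T_def Talpha_def)
  have "\<exists>!\<theta>s. gres P r \<gamma> Phi d \<theta>s = 0" using ex1_fixpoint by (simp add: fixpoint_iff)
  moreover have "convergent (\<lambda>t. Vt P \<gamma> Phi d \<alpha> \<beta> t x)" for x
    using Vt_tendsto_lyapunov[OF JSR_less] by (rule convergentI)
  moreover have "\<beta>\<^sup>2 * (V x - (norm x)\<^sup>2) \<le> \<beta>\<^sup>2 * V x" for x by (simp add: mult_left_mono)
  ultimately show ?thesis
    unfolding Let_def \<beta>_def[symmetric] Vinf_eq_lyapunov[OF JSR_less] V_def[symmetric] T_def[symmetric]
    using is_norm_sqrt_lyapunov[OF JSR_range_less, folded V_def] norm_sq_le_V V_le \<open>1 \<le> C\<close>
      lyapunov_Amat_le[OF JSR_less, folded V_def] sqrt_lyapunov_Amat_le[OF JSR_less, folded V_def]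
      sqrt_lyapunov_Talpha_diff_le[OF JSR_less, where r = r, folded V_def T_def]
      convergence_to_fixpoint(1,2) convergence_to_fixpoint(3)[OF _ matrix_vector_mul_bounded_linear[of Phi]]
    by (intro conjI exI[of _ C] allI impI) (auto simp: fixpoint_iff)
qed

end
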